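(* Let $V=\mathbb{R}^r$, let $\mathcal{A}$ be a simplicial arrangement in $V$, let $K=\langle\alpha^\vee_1,\ldots,\alpha^\vee_r\rangle_{>0}$ be a chamber (with $\alpha^\vee_1,\ldots,\alpha^\vee_r$ a basis of $V$), and let $\tilde K$ be the chamber with $\overline{K}\cap\overline{\tilde K}=\langle\alpha^\vee_2,\ldots,\alpha^\vee_r\rangle_{\ge 0}$. Let $\beta^\vee\in V$ be the unique vector such that $\tilde K=\langle\beta^\vee,\alpha^\vee_2,\ldots,\alpha^\vee_r\rangle_{>0}$ and $|B\cap(-\tilde B)|=1$, where $B=\{\alpha_1,\ldots,\alpha_r\}$ is the dual basis of $\{\alpha^\vee_1,\ldots,\alpha^\vee_r\}$ and $\tilde B=\{\beta_1,\ldots,\beta_r\}$ is the dual basis of $\{\beta^\vee,\alpha^\vee_2,\ldots,\alpha^\vee_r\}$ (indexed so that $\beta_1$ is dual to $\beta^\vee$ and $\beta_j$ to $\alpha_j^\vee$ for $j>1$). Write $\beta^\vee=\sum_{i=1}^r\mu_i\alpha^\vee_i$ with $\mu_i\in\mathbb{R}$. Then the linear map $\sigma:V^*\to V^*$, $\alpha_i\mapsto\beta_i$ ($i=1,\ldots,r$), is a reflection, and its matrix with respect to $B$ (the $j$-th column being the coordinate vector of $\sigma(\alpha_j)$) is \[\begin{pmatrix}-1&\mu_2&\cdots&\mu_r\\0&1&&0\\\vdots&&\ddots&\\0&0&&1\end{pmatrix}.\]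
   Context: A hyperplane arrangement in $V$ is a finite set of linear hyperplanes; its chambers are the connected components of the complement of their union. It is simplicial if every chamber equals $\langle v_1,\ldots,v_r\rangle_{>0}=\{\sum a_iv_i\mid a_i>0\}$ for some basis $v_1,\ldots,v_r$ of $V$; $\langle\cdots\rangle_{\ge0}$ denotes the closed cone of nonnegative combinations. A reflection on a vector space $W$ is an element $\sigma\in\mathrm{GL}(W)$, $\sigma\ne\mathrm{id}$, of finite order which fixes some hyperplane of $W$ pointwise. *)

theory Defs
  imports "HOL-Analysis.Analysis"
begin

text \<open>Here V = real^'n (r = CARD('n)); dual space V* identified with real^'n via the inner product.\<close>

definition lin_hyperplane :: "('a::euclidean_space) set \<Rightarrow> bool" where
  "lin_hyperplane H \<longleftrightarrow> (\<exists>a. a \<noteq> 0 \<and> H = {x. a \<bullet> x = 0})"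

definition hyperplane_arrangement :: "('a::euclidean_space) set set \<Rightarrow> bool" where
  "hyperplane_arrangement A \<longleftrightarrow> finite A \<and> (\<forall>H\<in>A. lin_hyperplane H)"

definition chambers :: "('a::euclidean_space) set set \<Rightarrow> 'a set set" where
  "chambers A = components (UNIV - \<Union>A)"

definition pos_cone :: "('i \<Rightarrow> 'a::real_vector) \<Rightarrow> 'i set \<Rightarrow> 'a set" where
  "pos_cone v I = {(\<Sum>i\<in>I. c i *\<^sub>R v i) | c. \<forall>i\<in>I. c i > 0}"

definition nonneg_cone :: "('i \<Rightarrow> 'a::real_vector) \<Rightarrow> 'i set \<Rightarrow> 'a set" where
  "nonneg_cone v I = {(\<Sum>i\<in>I. c i *\<^sub>R v i) | c. \<forall>i\<in>I. c i \<ge> 0}"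

definition is_basis :: "('n::finite \<Rightarrow> 'a::euclidean_space) \<Rightarrow> bool" where
  "is_basis v \<longleftrightarrow> inj v \<and> independent (range v) \<and> span (range v) = UNIV"

definition simplicial :: "(real^'n::finite) set set \<Rightarrow> bool" where
  "simplicial A \<longleftrightarrow> hyperplane_arrangement A \<and>
     (\<forall>C\<in>chambers A. \<exists>v::'n \<Rightarrow> real^'n. is_basis v \<and> C = pos_cone v UNIV)"

definition is_reflection :: "('a::euclidean_space \<Rightarrow> 'a) \<Rightarrow> bool" where
  "is_reflection s \<longleftrightarrow> linear s \<and> bij s \<and> s \<noteq> id \<and> (\<exists>m>0. (s ^^ m) = id) \<and>
     (\<exists>H. lin_hyperplane H \<and> (\<forall>x\<in>H. s x = x))"

end

theory Submission
  imports Defs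
begin

text \<open>Dualising the exchange of \<open>\<alpha>\<^sup>\<or>\<^sub>k\<close> for \<open>\<beta>\<^sup>\<or>\<close> gives
  \<open>\<beta>\<^sub>k = \<alpha>\<^sub>k / \<mu>\<^sub>k\<close> and \<open>\<beta>\<^sub>j = \<alpha>\<^sub>j - (\<mu>\<^sub>j / \<mu>\<^sub>k) \<alpha>\<^sub>k\<close> for \<open>j \<noteq> k\<close>. Since \<open>B\<close> is
  linearly independent, the only way some \<open>\<alpha>\<^sub>i\<close> can equal some \<open>-\<beta>\<^sub>j\<close> is \<open>\<alpha>\<^sub>k = -\<beta>\<^sub>k\<close>,
  i.e. \<open>\<mu>\<^sub>k = -1\<close>. Then \<open>\<sigma>\<close> is the map \<open>v \<mapsto> v + \<langle>\<beta>\<^sup>\<or> - \<alpha>\<^sup>\<or>\<^sub>k, v\<rangle> \<alpha>\<^sub>k\<close>, and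
  \<open>\<langle>\<beta>\<^sup>\<or> - \<alpha>\<^sup>\<or>\<^sub>k, \<alpha>\<^sub>k\<rangle> = \<mu>\<^sub>k - 1 = -2\<close> makes it an involution fixing a hyperplane.
  The chamber hypotheses serve only to single out \<open>\<beta>\<^sup>\<or>\<close>; the computation uses nothing
  beyond the duality relations and \<open>|B \<inter> -B'| = 1\<close>.\<close>

definition reflection_along :: "'a::real_inner \<Rightarrow> 'a \<Rightarrow> 'a \<Rightarrow> 'a" where
  "reflection_along a w v = v + (w \<bullet> v) *\<^sub>R a"

lemma linear_reflection_along: "linear (reflection_along a w)"
  unfolding reflection_along_def
  by (rule linearI) (auto simp: inner_add_right algebra_simps)

lemma reflection_along_involution:
  assumes "w \<bullet> a = -2"
  shows "reflection_along a w (reflection_along a w v) = v"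
  using assms by (simp add: reflection_along_def inner_add_right algebra_simps)

lemma is_reflection_reflection_along:
  fixes a w :: "'a::euclidean_space"
  assumes wa: "w \<bullet> a = -2"
  shows "is_reflection (reflection_along a w)"
  unfolding is_reflection_def
proof (intro conjI)
  let ?s = "reflection_along a w"
  have inv: "?s (?s v) = v" for v
    using reflection_along_involution[OF wa] .
  show "linear ?s" by (rule linear_reflection_along)
  show "bij ?s" by (metis bij_betw_byWitness inv subset_UNIV surjI)
  show "?s \<noteq> id"
  proof
    assume "?s = id"
    then have "?s a = a" by simp
    then have "(-2) *\<^sub>R a = 0"
      using wa by (simp add: reflection_along_def)
    moreover have "a \<noteq> 0" using wa by auto
    ultimately show False by simp
  qed
  show "\<exists>m>0. ?s ^^ m = id"
    by (rule exI[of _ 2]) (auto simp: fun_eq_iff inv numeral_2_eq_2)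
  show "\<exists>H. lin_hyperplane H \<and> (\<forall>x\<in>H. ?s x = x)"
  proof (intro exI conjI)
    show "lin_hyperplane {x. w \<bullet> x = 0}"
      unfolding lin_hyperplane_def using wa by (intro exI[of _ w]) auto
    show "\<forall>x\<in>{x. w \<bullet> x = 0}. ?s x = x" by (simp add: reflection_along_def)
  qed
qed

lemma eq_if_inner_basis_eq:
  fixes av :: "'n::finite \<Rightarrow> 'a::euclidean_space"
  assumes "is_basis av" and "\<And>j. u \<bullet> av j = v \<bullet> av j"
  shows "u = v"
proof -
  have "orthogonal (u - v) y" if "y \<in> range av" for y
    using that assms(2) by (auto simp: orthogonal_def inner_diff_left)
  then have "orthogonal (u - v) (u - v)"
    using orthogonal_to_span[of "u - v" "range av" "u - v"] assms(1)
    by (simp add: is_basis_def)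
  then show ?thesis by (simp add: orthogonal_def)
qed

context
  fixes av alpha :: "'n::finite \<Rightarrow> 'a::euclidean_space"
  assumes alpha_dual: "\<And>i j. alpha i \<bullet> av j = (if i = j then 1 else 0)"
begin

lemma inner_dual_sum_left: "(\<Sum>i\<in>UNIV. c i *\<^sub>R alpha i) \<bullet> av l = c l"
  by (simp add: inner_sum_left alpha_dual if_distrib cong: if_cong)

lemma inner_dual_sum_right: "alpha l \<bullet> (\<Sum>i\<in>UNIV. c i *\<^sub>R av i) = c l"
  by (simp add: inner_sum_right alpha_dual if_distrib cong: if_cong)

lemma dual_basis_expansion:
  assumes "is_basis av"
  shows "v = (\<Sum>j\<in>UNIV. (v \<bullet> av j) *\<^sub>R alpha j)"
  by (rule eq_if_inner_basis_eq[OF assms]) (simp add: inner_dual_sum_left)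

lemma linear_eq_on_dual_basis:
  assumes "is_basis av" and "linear f" and "linear g" and "\<And>j. f (alpha j) = g (alpha j)"
  shows "f = g"
proof
  fix v
  have "f v = (\<Sum>j\<in>UNIV. (v \<bullet> av j) *\<^sub>R f (alpha j))"
    by (subst dual_basis_expansion[OF assms(1), of v])
       (simp add: linear_sum[OF assms(2)] linear_scale[OF assms(2)])
  also have "\<dots> = g v"
    by (subst (2) dual_basis_expansion[OF assms(1), of v])
       (simp add: assms(4) linear_sum[OF assms(3)] linear_scale[OF assms(3)])
  finally show "f v = g v" .
qed

context
  fixes beta :: "'n \<Rightarrow> 'a" and bv :: 'a and k :: 'n and mu :: "'n \<Rightarrow> real"
  assumes beta_dual: "\<And>i j. beta i \<bullet> (av(k := bv)) j = (if i = j then 1 else 0)"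
    and mu_def: "bv = (\<Sum>i\<in>UNIV. mu i *\<^sub>R av i)"
begin

lemma exchanged_dual_inner_other:
  "l \<noteq> k \<Longrightarrow> beta i \<bullet> av l = (if i = l then 1 else 0)"
  using beta_dual[of i l] by simp

lemma exchanged_dual_inner_exchanged:
  "mu k * (beta i \<bullet> av k) + (if i = k then 0 else mu i) = (if i = k then 1 else 0)"
proof -
  have "(if i = k then 1 else 0) = beta i \<bullet> bv"
    using beta_dual[of i k] by simp
  also have "\<dots> = (\<Sum>l\<in>UNIV. mu l * (beta i \<bullet> av l))"
    by (simp add: mu_def inner_sum_right)
  also have "\<dots> = mu k * (beta i \<bullet> av k) + (\<Sum>l\<in>UNIV - {k}. mu l * (beta i \<bullet> av l))"
    by (simp add: sum.remove[of UNIV k])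
  also have "(\<Sum>l\<in>UNIV - {k}. mu l * (beta i \<bullet> av l)) = (\<Sum>l\<in>UNIV - {k}. if l = i then mu i else 0)"
    by (rule sum.cong) (auto simp: exchanged_dual_inner_other)
  also have "\<dots> = (if i = k then 0 else mu i)"
    by (simp add: sum.delta')
  finally show ?thesis ..
qed

lemma exchanged_coefficient_eq_neg_one:
  assumes "range alpha \<inter> uminus ` range beta \<noteq> {}"
  shows "mu k = -1"
proof -
  obtain i j where ij: "alpha i = - beta j" using assms by auto
  have kk: "mu k * (beta k \<bullet> av k) = 1"
    using exchanged_dual_inner_exchanged[of k] by simp
  show ?thesis
  proof (cases "j = k")
    case False
    have "alpha i \<bullet> av j = - (beta j \<bullet> av j)" by (simp add: ij)
    with False show ?thesis
      using alpha_dual[of i j] exchanged_dual_inner_other[OF False, of j]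
      by (simp split: if_splits)
  next
    case True
    then have "alpha i \<bullet> av k = - (beta k \<bullet> av k)" by (simp add: ij)
    with kk show ?thesis
      using alpha_dual[of i k] by (cases "i = k") auto
  qed
qed

lemma exchanged_dual_inner_exchanged_neg_one:
  "mu k = -1 \<Longrightarrow> beta j \<bullet> av k = mu j"
  using exchanged_dual_inner_exchanged[of j] by (cases "j = k") auto

lemma exchanged_dual_eq_reflection_along:
  assumes "is_basis av" and "mu k = -1"
  shows "beta j = reflection_along (alpha k) (bv - av k) (alpha j)"
proof (rule eq_if_inner_basis_eq[OF assms(1)])
  fix l
  note beta_k = exchanged_dual_inner_exchanged_neg_one[OF assms(2), of j]
  have "(bv - av k) \<bullet> alpha j = mu j - (if j = k then 1 else 0)"
    using inner_dual_sum_right[of j mu] alpha_dual[of j k]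
    by (simp add: mu_def[symmetric] inner_diff_right inner_commute)
  then show "beta j \<bullet> av l = reflection_along (alpha k) (bv - av k) (alpha j) \<bullet> av l"
    by (cases "l = k")
       (auto simp: reflection_along_def inner_add_left alpha_dual beta_k exchanged_dual_inner_other)
qed

end

end

theorem corollary2p6:
  fixes A :: "(real^'n) set set"
    and av alpha beta :: "'n \<Rightarrow> real^'n"
    and bv :: "real^'n"
    and k :: 'n
    and K Kt :: "(real^'n) set"
    and mu :: "'n \<Rightarrow> real"
    and sigma :: "real^'n \<Rightarrow> real^'n"
  assumes simp: "simplicial A"
    and av_basis: "is_basis av"
    and K_ch: "K \<in> chambers A"
    and K_def: "K = pos_cone av UNIV"
    and Kt_ch: "Kt \<in> chambers A"
    and Kt_wall: "closure K \<inter> closure Kt = nonneg_cone av (UNIV - {k})"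
    and Kt_def: "Kt = pos_cone (av(k := bv)) UNIV"
    and alpha_dual: "\<And>i j. alpha i \<bullet> av j = (if i = j then 1 else 0)"
    and beta_dual: "\<And>i j. beta i \<bullet> (av(k := bv)) j = (if i = j then 1 else 0)"
    and card_one: "card (range alpha \<inter> uminus ` range beta) = 1"
    and mu_def: "bv = (\<Sum>i\<in>UNIV. mu i *\<^sub>R av i)"
    and sigma_lin: "linear sigma"
    and sigma_def: "\<And>i. sigma (alpha i) = beta i"
  shows "is_reflection sigma \<and>
    (\<forall>j. sigma (alpha j) = (\<Sum>i\<in>UNIV.
        (if i = k then (if j = k then -1 else mu j) else (if i = j then 1 else 0)) *\<^sub>R alpha i))"
proof -
  let ?\<rho> = "reflection_along (alpha k) (bv - av k)"
  note dual = alpha_dual beta_dual mu_def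
  have muk: "mu k = -1"
    using exchanged_coefficient_eq_neg_one[OF dual] card_one by force
  have beta_eq: "beta j = ?\<rho> (alpha j)" for j
    using exchanged_dual_eq_reflection_along[OF dual av_basis muk] .
  have "sigma = ?\<rho>"
    using linear_eq_on_dual_basis[OF alpha_dual av_basis sigma_lin linear_reflection_along]
    by (simp add: sigma_def beta_eq)
  moreover have "(bv - av k) \<bullet> alpha k = -2"
    using inner_dual_sum_right[OF alpha_dual, of k mu] alpha_dual[of k k] muk
    by (simp add: mu_def[symmetric] inner_diff_right inner_commute)
  moreover have "?\<rho> (alpha j) = (\<Sum>i\<in>UNIV.
        (if i = k then (if j = k then -1 else mu j) else (if i = j then 1 else 0)) *\<^sub>R alpha i)" for j
    by (rule eq_if_inner_basis_eq[OF av_basis])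
       (auto simp: inner_dual_sum_left[OF alpha_dual] beta_eq[symmetric] muk
         exchanged_dual_inner_other[OF dual] exchanged_dual_inner_exchanged_neg_one[OF dual])
  ultimately show ?thesis
    using is_reflection_reflection_along by auto
qed

end
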